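(* For $N\in\{0,1,2,\ldots\}$ and $0<s<1$, the function $x\mapsto\frac{\Gamma(x)}{\Gamma(x+N+s)}$, $x>0$, is a generalized Stieltjes function of order $N+1$.
   Context: For $\lambda>0$, a generalized Stieltjes function of order $\lambda$ is a function $f:(0,\infty)\to\mathbb R$ of the form $f(x)=\int_0^\infty\frac{d\mu(t)}{(x+t)^\lambda}+c$ with $\mu$ a positive measure on $[0,\infty)$ making the integral converge for all $x>0$ and $c\geq0$. *)

theory Defs
  imports "HOL-Analysis.Analysis"
begin

definition gen_stieltjes :: "real \<Rightarrow> (real \<Rightarrow> real) \<Rightarrow> bool" where
  "gen_stieltjes lam f \<longleftrightarrow> lam > 0 \<and>
     (\<exists>(\<mu>::real measure) (c::real).
        sets \<mu> = sets borel \<and> emeasure \<mu> {..<0} = 0 \<and> c \<ge> 0 \<and>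
        (\<forall>x>0. set_integrable \<mu> {0..} (\<lambda>t. 1 / (x + t) powr lam) \<and>
               f x = (LINT t:{0..}|\<mu>. 1 / (x + t) powr lam) + c))"

end

theory Submission
  imports Defs
begin

text \<open>
  For \<open>N = 0\<close>, expanding \<open>(1 - u) powr (s - 1)\<close> binomially inside the Beta integral gives
  \<open>Gamma x / Gamma (x + s) = (\<Sum>k. (1 - s)\<^sub>k / (k! Gamma s) / (x + k))\<close> with nonnegative
  coefficients (as \<open>s < 1\<close>), i.e. a Stieltjes representation of order 1 by point masses at the
  nonnegative integers.
  For the induction step write \<open>f x = Gamma x / Gamma (x + N + s)\<close>. The functional equation of
  Gamma gives \<open>Gamma x / Gamma (x + N + 1 + s) = (f x - f (x + 1)) / (N + s)\<close>, and
  \<open>1 / y^(N+1) - 1 / (y + 1)^(N+1) = (N + 1) \<integral>\<^sub>0\<^sup>1 dv / (y + v)^(N+2)\<close>.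
  Hence if \<open>\<mu>\<close> represents \<open>f\<close> with order \<open>N + 1\<close>, the convolution of \<open>\<mu>\<close> with
  Lebesgue measure on \<open>[0, 1]\<close>, scaled by \<open>(N + 1) / (N + s)\<close>, represents the next ratio
  with order \<open>N + 2\<close>.
\<close>

lemma sums_one_minus_powr:
  fixes s u :: real
  assumes "0 \<le> u" "u < 1"
  shows "(\<lambda>k. pochhammer (1 - s) k / fact k * u ^ k) sums (1 - u) powr (s - 1)"
proof -
  have "(\<lambda>k. ((s - 1) gchoose k) * (- u) ^ k) sums (1 + - u) powr (s - 1)"
    by (rule gen_binomial_real) (use assms in auto)
  moreover have "((s - 1) gchoose k) * (- u) ^ k = pochhammer (1 - s) k / fact k * u ^ k" for k
  proof -
    have "(-1::real) ^ k * (-1) ^ k = 1"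
      by (simp flip: power_mult_distrib)
    then show ?thesis
      unfolding gbinomial_pochhammer power_minus[of u k] by (simp add: mult_ac)
  qed
  ultimately show ?thesis
    by simp
qed

lemma nn_integral_powr_unit_interval:
  fixes a :: real
  assumes "a > 0"
  shows "(\<integral>\<^sup>+u\<in>{0<..<1}. ennreal (u powr (a - 1)) \<partial>lborel) = ennreal (1 / a)"
proof -
  have "((\<lambda>u. u powr (a - 1)) has_integral (1 powr (a - 1 + 1) / (a - 1 + 1))) {0..1}"
    by (rule has_integral_powr_from_0) (use assms in auto)
  then have "((\<lambda>u. u powr (a - 1)) has_integral (1 / a)) {0<..<1}"
    by (simp add: has_integral_Icc_iff_Ioo)
  then show ?thesis
    by (intro nn_integral_has_integral_lebesgue') auto
qed

lemma nn_integral_powr_mult_power_series: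
  fixes c :: "nat \<Rightarrow> real" and g :: "real \<Rightarrow> real" and x :: real
  assumes c_nonneg: "\<And>k. 0 \<le> c k" and "x > 0"
    and g: "\<And>u. 0 < u \<Longrightarrow> u < 1 \<Longrightarrow> (\<lambda>k. c k * u ^ k) sums g u"
  shows "(\<integral>\<^sup>+u\<in>{0<..<1}. ennreal (u powr (x - 1) * g u) \<partial>lborel)
    = (\<Sum>k. ennreal (c k / (x + k)))"
proof -
  have "(\<integral>\<^sup>+u\<in>{0<..<1}. ennreal (u powr (x - 1) * g u) \<partial>lborel)
      = (\<integral>\<^sup>+u\<in>{0<..<1}. (\<Sum>k. ennreal (c k * u powr (x - 1 + k))) \<partial>lborel)"
  proof (intro set_nn_integral_cong refl)
    fix u :: real
    assume "u \<in> space lborel \<inter> {0<..<1}"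
    then have u: "0 < u" "u < 1"
      by auto
    have "(\<lambda>k. u powr (x - 1) * (c k * u ^ k)) sums (u powr (x - 1) * g u)"
      by (intro sums_mult g u)
    moreover have "0 \<le> g u"
      by (rule sums_le[OF _ sums_zero g[OF u]]) (use c_nonneg u in simp)
    moreover have "u powr (x - 1) * (c k * u ^ k) = c k * u powr (x - 1 + k)" for k
      using u by (simp add: powr_add powr_realpow)
    ultimately have "(\<lambda>k. ennreal (c k * u powr (x - 1 + k))) sums ennreal (u powr (x - 1) * g u)"
      using c_nonneg u by (subst sums_ennreal) auto
    then show "ennreal (u powr (x - 1) * g u) = (\<Sum>k. ennreal (c k * u powr (x - 1 + k)))"
      by (simp add: sums_iff)
  qed
  also have "\<dots> = (\<Sum>k. \<integral>\<^sup>+u\<in>{0<..<1}. ennreal (c k * u powr (x - 1 + k)) \<partial>lborel)"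
    unfolding ennreal_suminf_multc[symmetric] by (rule nn_integral_suminf) measurable
  also have "\<dots> = (\<Sum>k. ennreal (c k / (x + k)))"
  proof (intro suminf_cong)
    fix k
    have "(\<integral>\<^sup>+u\<in>{0<..<1}. ennreal (c k * u powr (x - 1 + k)) \<partial>lborel)
        = ennreal (c k) * (\<integral>\<^sup>+u\<in>{0<..<1}. ennreal (u powr ((x + k) - 1)) \<partial>lborel)"
      using c_nonneg
      by (subst nn_integral_cmult[symmetric]) (auto simp: ennreal_mult mult.assoc algebra_simps)
    also have "\<dots> = ennreal (c k / (x + k))"
      using c_nonneg \<open>x > 0\<close> by (simp add: nn_integral_powr_unit_interval ennreal_mult[symmetric])
    finally show "(\<integral>\<^sup>+u\<in>{0<..<1}. ennreal (c k * u powr (x - 1 + k)) \<partial>lborel)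
        = ennreal (c k / (x + k))" .
  qed
  finally show ?thesis .
qed

lemma Beta_sums:
  fixes x s :: real
  assumes "x > 0" "0 < s" "s < 1"
  shows "(\<lambda>k. pochhammer (1 - s) k / fact k / (x + k)) sums Beta x s"
proof -
  define c where "c k = pochhammer (1 - s) k / fact k" for k
  have c_nonneg: "c k \<ge> 0" for k
    unfolding c_def using assms by (intro divide_nonneg_pos pochhammer_nonneg) auto
  have "((\<lambda>u. u powr (x - 1) * (1 - u) powr (s - 1)) has_integral Beta x s) {0<..<1}"
    using has_integral_Beta_real[of x s] assms by (simp add: has_integral_Icc_iff_Ioo)
  then have "ennreal (Beta x s) =
      (\<integral>\<^sup>+u\<in>{0<..<1}. ennreal (u powr (x - 1) * (1 - u) powr (s - 1)) \<partial>lborel)"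
    by (intro nn_integral_has_integral_lebesgue'[symmetric]) auto
  also have "\<dots> = (\<Sum>k. ennreal (c k / (x + k)))"
    using c_nonneg \<open>x > 0\<close> unfolding c_def
    by (intro nn_integral_powr_mult_power_series sums_one_minus_powr) auto
  finally have "(\<lambda>k. ennreal (c k / (x + k))) sums ennreal (Beta x s)"
    using summable_sums[OF summableI, of "\<lambda>k. ennreal (c k / (x + k))"] by simp
  moreover have "Beta x s \<ge> 0"
    using assms by (simp add: Beta_def)
  moreover have "c k / (x + k) \<ge> 0" for k
    using assms c_nonneg by simp
  ultimately have "(\<lambda>k. c k / (x + k)) sums Beta x s"
    using sums_ennreal[of "\<lambda>k. c k / (x + k)" "Beta x s"] by simp
  then show ?thesis
    by (simp add: c_def)
qed

text \<open>The clause \<open>0 \<le> f x\<close> is needed because \<open>ennreal\<close> sends negative reals to \<open>0\<close>.\<close>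

definition stieltjes_repr :: "nat \<Rightarrow> real measure \<Rightarrow> (real \<Rightarrow> real) \<Rightarrow> bool" where
  "stieltjes_repr n \<mu> f \<longleftrightarrow> sets \<mu> = sets borel \<and> emeasure \<mu> {..<0} = 0 \<and>
     (\<forall>x>0. 0 \<le> f x \<and> (\<integral>\<^sup>+t. ennreal (1 / (x + t) ^ n) \<partial>\<mu>) = ennreal (f x))"

lemma AE_nonneg_if_emeasure_lessThan_zero:
  fixes \<mu> :: "real measure"
  assumes "sets \<mu> = sets borel" "emeasure \<mu> {..<0} = 0"
  shows "AE t in \<mu>. 0 \<le> t"
proof -
  have "space \<mu> = UNIV"
    using sets_eq_imp_space_eq[OF assms(1)] by simp
  then show ?thesis
    using assms by (subst AE_iff_measurable[of "{..<0}"]) auto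
qed

lemma stieltjes_repr_cong:
  assumes "stieltjes_repr n \<mu> f" "\<And>x. x > 0 \<Longrightarrow> f x = g x"
  shows "stieltjes_repr n \<mu> g"
  using assms by (simp add: stieltjes_repr_def)

lemma stieltjes_repr_scale:
  assumes "stieltjes_repr n \<mu> f" "0 \<le> c"
  shows "stieltjes_repr n (scale_measure (ennreal c) \<mu>) (\<lambda>x. c * f x)"
proof -
  have [measurable_cong]: "sets \<mu> = sets borel"
    using assms(1) by (simp add: stieltjes_repr_def)
  then show ?thesis
    using assms by (simp add: stieltjes_repr_def nn_integral_scale_measure ennreal_mult)
qed

lemma stieltjes_repr_point_masses:
  fixes w :: "nat \<Rightarrow> real" and f :: "real \<Rightarrow> real"
  assumes w_nonneg: "\<And>k. 0 \<le> w k"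
    and sums: "\<And>x::real. x > 0 \<Longrightarrow> (\<lambda>k. w k / (x + k) ^ n) sums f x"
  shows "stieltjes_repr n (distr (density (count_space UNIV) (\<lambda>k. ennreal (w k))) borel real) f"
proof -
  let ?\<mu> = "distr (density (count_space UNIV) (\<lambda>k. ennreal (w k))) borel real"
  have "emeasure ?\<mu> {..<0} = 0"
    by (subst emeasure_distr) (auto simp: vimage_def)
  moreover have "0 \<le> f x \<and> (\<integral>\<^sup>+t. ennreal (1 / (x + t) ^ n) \<partial>?\<mu>) = ennreal (f x)"
    if "x > 0" for x
  proof
    have terms_nonneg: "0 \<le> w k / (x + k) ^ n" for k
      using w_nonneg \<open>x > 0\<close> by simp
    then show "0 \<le> f x"
      using suminf_nonneg[OF sums_summable[OF sums] terms_nonneg] sums_unique[OF sums] \<open>x > 0\<close>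
      by simp
    have "(\<integral>\<^sup>+t. ennreal (1 / (x + t) ^ n) \<partial>?\<mu>)
        = (\<Sum>k. ennreal (w k) * ennreal (1 / (x + k) ^ n))"
      by (simp add: nn_integral_distr nn_integral_density nn_integral_count_space_nat)
    also have "\<dots> = (\<Sum>k. ennreal (w k / (x + k) ^ n))"
      using w_nonneg \<open>x > 0\<close> by (simp add: ennreal_mult[symmetric])
    also have "\<dots> = ennreal (f x)"
    proof (rule sums_unique[symmetric])
      show "(\<lambda>k. ennreal (w k / (x + k) ^ n)) sums ennreal (f x)"
        using sums[OF \<open>x > 0\<close>] terms_nonneg \<open>0 \<le> f x\<close> by (simp add: sums_ennreal)
    qed
    finally show "(\<integral>\<^sup>+t. ennreal (1 / (x + t) ^ n) \<partial>?\<mu>) = ennreal (f x)" .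
  qed
  ultimately show ?thesis
    by (simp add: stieltjes_repr_def)
qed

lemma gen_stieltjes_if_stieltjes_repr:
  assumes repr: "stieltjes_repr n \<mu> f" and "n > 0"
  shows "gen_stieltjes (real n) f"
proof -
  have sets_\<mu> [measurable_cong]: "sets \<mu> = sets borel" and null: "emeasure \<mu> {..<0} = 0"
    and f: "\<And>x. x > 0 \<Longrightarrow>
      0 \<le> f x \<and> (\<integral>\<^sup>+t. ennreal (1 / (x + t) ^ n) \<partial>\<mu>) = ennreal (f x)"
    using repr by (auto simp: stieltjes_repr_def)
  have "set_integrable \<mu> {0..} (\<lambda>t. 1 / (x + t) powr n) \<and>
      f x = (LINT t:{0..}|\<mu>. 1 / (x + t) powr n)" if "x > 0" for x
  proof -
    let ?g = "\<lambda>t. indicator {0..} t *\<^sub>R (1 / (x + t) powr n)"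
    have "AE t in \<mu>. ennreal (?g t) = ennreal (1 / (x + t) ^ n)"
      using AE_nonneg_if_emeasure_lessThan_zero[OF sets_\<mu> null]
      by eventually_elim (use \<open>x > 0\<close> in \<open>simp add: powr_realpow\<close>)
    then have g_integral: "(\<integral>\<^sup>+t. ennreal (?g t) \<partial>\<mu>) = ennreal (f x)"
      using f[OF \<open>x > 0\<close>] by (simp add: nn_integral_cong_AE)
    have g_nonneg: "AE t in \<mu>. 0 \<le> ?g t"
      by (simp split: split_indicator)
    have "integrable \<mu> ?g"
      by (rule integrableI_nn_integral_finite[OF _ g_nonneg g_integral]) measurable
    moreover have "integral\<^sup>L \<mu> ?g = f x"
      using g_integral f[OF \<open>x > 0\<close>] by (subst integral_eq_nn_integral) (auto intro: g_nonneg)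
    ultimately show ?thesis
      by (simp add: set_integrable_def set_lebesgue_integral_def)
  qed
  then show ?thesis
    unfolding gen_stieltjes_def using sets_\<mu> null \<open>n > 0\<close>
    by (intro conjI exI[of _ \<mu>] exI[of _ 0]) auto
qed

definition conv_unit_interval :: "real measure \<Rightarrow> real measure" where
  "conv_unit_interval \<mu> =
     distr (density (\<mu> \<Otimes>\<^sub>M lborel) (\<lambda>(t, v). indicator {0..1} v)) borel (\<lambda>(t, v). t + v)"

lemma sets_conv_unit_interval [measurable_cong]: "sets (conv_unit_interval \<mu>) = sets borel"
  by (simp add: conv_unit_interval_def)

lemma nn_integral_conv_unit_interval:
  assumes [measurable_cong]: "sets \<mu> = sets borel" and [measurable]: "g \<in> borel_measurable borel"
  shows "(\<integral>\<^sup>+t. g t \<partial>conv_unit_interval \<mu>)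
    = (\<integral>\<^sup>+t. (\<integral>\<^sup>+v\<in>{0..1}. g (t + v) \<partial>lborel) \<partial>\<mu>)"
proof -
  have "(\<integral>\<^sup>+t. g t \<partial>conv_unit_interval \<mu>)
      = (\<integral>\<^sup>+p. indicator {0..1} (snd p) * g (fst p + snd p) \<partial>(\<mu> \<Otimes>\<^sub>M lborel))"
    unfolding conv_unit_interval_def
    by (simp add: nn_integral_distr nn_integral_density case_prod_beta)
  also have "\<dots> = (\<integral>\<^sup>+t. (\<integral>\<^sup>+v\<in>{0..1}. g (t + v) \<partial>lborel) \<partial>\<mu>)"
    by (subst lborel.nn_integral_fst[symmetric]) (auto simp: mult.commute)
  finally show ?thesis .
qed

lemma emeasure_conv_unit_interval_lessThan_zero:
  assumes "sets \<mu> = sets borel" "emeasure \<mu> {..<0} = 0"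
  shows "emeasure (conv_unit_interval \<mu>) {..<0} = 0"
proof -
  have "emeasure (conv_unit_interval \<mu>) {..<0}
      = (\<integral>\<^sup>+t. indicator {..<0} t \<partial>conv_unit_interval \<mu>)"
    by (rule nn_integral_indicator[symmetric]) (simp add: sets_conv_unit_interval)
  also have "\<dots> = (\<integral>\<^sup>+t. (\<integral>\<^sup>+v\<in>{0..1}. indicator {..<0} (t + v) \<partial>lborel) \<partial>\<mu>)"
    by (rule nn_integral_conv_unit_interval[OF assms(1)]) simp
  also have "\<dots> = (\<integral>\<^sup>+t. 0 \<partial>\<mu>)"
  proof (intro nn_integral_cong_AE)
    show "AE t in \<mu>. (\<integral>\<^sup>+v\<in>{0..1}. indicator {..<0} (t + v) \<partial>lborel) = 0"
      using AE_nonneg_if_emeasure_lessThan_zero[OF assms]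
    proof eventually_elim
      case (elim t)
      then have "(\<lambda>v. indicator {..<0} (t + v) * indicator {0..1} v) = (\<lambda>v. 0 :: ennreal)"
        by (auto split: split_indicator)
      then show ?case
        by simp
    qed
  qed
  finally show ?thesis
    by simp
qed

lemma nn_integral_inverse_power_unit_interval:
  fixes y :: real
  assumes "y > 0"
  shows "(\<integral>\<^sup>+v\<in>{0..1}. ennreal (1 / (y + v) ^ Suc (Suc m)) \<partial>lborel)
    = ennreal ((1 / y ^ Suc m - 1 / (y + 1) ^ Suc m) / Suc m)"
proof -
  define F where "F v = - 1 / (Suc m * (y + v) ^ Suc m)" for v :: real
  have "(F has_real_derivative 1 / (y + v) ^ Suc (Suc m)) (at v)" if "v \<ge> 0" for v
  proof -
    have pos: "y + v > 0"
      using assms that by simp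
    show ?thesis
      unfolding F_def by (rule derivative_eq_intros refl | use pos in simp)+
  qed
  then have "((\<lambda>v. 1 / (y + v) ^ Suc (Suc m)) has_integral (F 1 - F 0)) {0..1}"
    by (intro fundamental_theorem_of_calculus)
      (auto simp: has_real_derivative_iff_has_vector_derivative intro: has_vector_derivative_at_within)
  moreover have "F 1 - F 0 = (1 / y ^ Suc m - 1 / (y + 1) ^ Suc m) / Suc m"
    unfolding F_def by (simp add: diff_divide_distrib mult.commute)
  ultimately show ?thesis
    using assms by (intro nn_integral_has_integral_lebesgue') auto
qed

lemma nn_integral_conv_unit_interval_inverse_power:
  assumes "sets \<mu> = sets borel" "emeasure \<mu> {..<0} = 0" "x > 0"
  shows "(\<integral>\<^sup>+t. ennreal (1 / (x + t) ^ Suc (Suc m)) \<partial>conv_unit_interval \<mu>)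
    = ennreal (1 / Suc m) *
      (\<integral>\<^sup>+t. ennreal (1 / (x + t) ^ Suc m) - ennreal (1 / (x + 1 + t) ^ Suc m) \<partial>\<mu>)"
proof -
  have [measurable_cong]: "sets \<mu> = sets borel"
    by (fact assms(1))
  have "(\<integral>\<^sup>+t. ennreal (1 / (x + t) ^ Suc (Suc m)) \<partial>conv_unit_interval \<mu>)
      = (\<integral>\<^sup>+t. (\<integral>\<^sup>+v\<in>{0..1}. ennreal (1 / (x + (t + v)) ^ Suc (Suc m)) \<partial>lborel) \<partial>\<mu>)"
    by (rule nn_integral_conv_unit_interval[OF assms(1)]) simp
  also have "\<dots> = (\<integral>\<^sup>+t. ennreal (1 / Suc m) *
      (ennreal (1 / (x + t) ^ Suc m) - ennreal (1 / (x + 1 + t) ^ Suc m)) \<partial>\<mu>)"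
  proof (rule nn_integral_cong_AE)
    show "AE t in \<mu>. (\<integral>\<^sup>+v\<in>{0..1}. ennreal (1 / (x + (t + v)) ^ Suc (Suc m)) \<partial>lborel)
        = ennreal (1 / Suc m) * (ennreal (1 / (x + t) ^ Suc m) - ennreal (1 / (x + 1 + t) ^ Suc m))"
      using AE_nonneg_if_emeasure_lessThan_zero[OF assms(1,2)]
    proof eventually_elim
      case (elim t)
      have "(\<integral>\<^sup>+v\<in>{0..1}. ennreal (1 / (x + (t + v)) ^ Suc (Suc m)) \<partial>lborel)
          = (\<integral>\<^sup>+v\<in>{0..1}. ennreal (1 / ((x + t) + v) ^ Suc (Suc m)) \<partial>lborel)"
        by (simp add: add.assoc)
      also have "\<dots> = ennreal ((1 / (x + t) ^ Suc m - 1 / (x + t + 1) ^ Suc m) / Suc m)"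
        by (rule nn_integral_inverse_power_unit_interval) (use \<open>x > 0\<close> elim in simp)
      also have "\<dots> = ennreal (1 / Suc m * (1 / (x + t) ^ Suc m - 1 / (x + 1 + t) ^ Suc m))"
        by (simp add: add_ac)
      also have "\<dots> = ennreal (1 / Suc m) *
          (ennreal (1 / (x + t) ^ Suc m) - ennreal (1 / (x + 1 + t) ^ Suc m))"
        using \<open>x > 0\<close> elim by (subst ennreal_mult') (simp_all add: ennreal_minus)
      finally show ?case .
    qed
  qed
  also have "\<dots> = ennreal (1 / Suc m) *
      (\<integral>\<^sup>+t. ennreal (1 / (x + t) ^ Suc m) - ennreal (1 / (x + 1 + t) ^ Suc m) \<partial>\<mu>)"
    by (rule nn_integral_cmult) measurable
  finally show ?thesis .
qed

lemma stieltjes_repr_forward_difference: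
  assumes repr: "stieltjes_repr (Suc m) \<mu> f"
  shows "stieltjes_repr (Suc (Suc m)) (conv_unit_interval \<mu>) (\<lambda>x. (f x - f (x + 1)) / Suc m)"
proof -
  have sets_\<mu> [measurable_cong]: "sets \<mu> = sets borel" and null: "emeasure \<mu> {..<0} = 0"
    and f: "\<And>x. x > 0 \<Longrightarrow>
      0 \<le> f x \<and> (\<integral>\<^sup>+t. ennreal (1 / (x + t) ^ Suc m) \<partial>\<mu>) = ennreal (f x)"
    using repr by (auto simp: stieltjes_repr_def)
  have "0 \<le> (f x - f (x + 1)) / Suc m \<and>
      (\<integral>\<^sup>+t. ennreal (1 / (x + t) ^ Suc (Suc m)) \<partial>conv_unit_interval \<mu>)
        = ennreal ((f x - f (x + 1)) / Suc m)"
    if "x > 0" for x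
  proof
    have f_x: "(\<integral>\<^sup>+t. ennreal (1 / (x + t) ^ Suc m) \<partial>\<mu>) = ennreal (f x)"
      and f_x1: "(\<integral>\<^sup>+t. ennreal (1 / (x + 1 + t) ^ Suc m) \<partial>\<mu>) = ennreal (f (x + 1))"
      using f[of x] f[of "x + 1"] \<open>x > 0\<close> by (simp_all add: add_ac)
    have antimono: "AE t in \<mu>. ennreal (1 / (x + 1 + t) ^ Suc m) \<le> ennreal (1 / (x + t) ^ Suc m)"
      using AE_nonneg_if_emeasure_lessThan_zero[OF sets_\<mu> null]
    proof eventually_elim
      case (elim t)
      have "(x + t) ^ Suc m \<le> (x + 1 + t) ^ Suc m"
        by (rule power_mono) (use \<open>x > 0\<close> elim in auto)
      then show ?case
        using \<open>x > 0\<close> elim by (auto intro!: ennreal_leI frac_le simp del: power_Suc)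
    qed
    have "ennreal (f (x + 1)) \<le> ennreal (f x)"
      unfolding f_x[symmetric] f_x1[symmetric] by (rule nn_integral_mono_AE[OF antimono])
    then have f_antimono: "f (x + 1) \<le> f x"
      using f \<open>x > 0\<close> by (simp add: ennreal_le_iff)
    then show "0 \<le> (f x - f (x + 1)) / Suc m"
      by simp
    have "(\<integral>\<^sup>+t. ennreal (1 / (x + t) ^ Suc (Suc m)) \<partial>conv_unit_interval \<mu>)
        = ennreal (1 / Suc m) *
          (\<integral>\<^sup>+t. ennreal (1 / (x + t) ^ Suc m) - ennreal (1 / (x + 1 + t) ^ Suc m) \<partial>\<mu>)"
      by (rule nn_integral_conv_unit_interval_inverse_power[OF sets_\<mu> null \<open>x > 0\<close>])
    also have "\<dots> = ennreal (1 / Suc m) * (ennreal (f x) - ennreal (f (x + 1)))"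
      unfolding f_x[symmetric] f_x1[symmetric]
      by (subst nn_integral_diff) (use antimono f_x1 in auto)
    also have "\<dots> = ennreal ((f x - f (x + 1)) / Suc m)"
      using f \<open>x > 0\<close> f_antimono by (simp add: ennreal_minus ennreal_mult[symmetric])
    finally show "(\<integral>\<^sup>+t. ennreal (1 / (x + t) ^ Suc (Suc m)) \<partial>conv_unit_interval \<mu>)
        = ennreal ((f x - f (x + 1)) / Suc m)" .
  qed
  then show ?thesis
    using emeasure_conv_unit_interval_lessThan_zero[OF sets_\<mu> null]
    by (simp add: stieltjes_repr_def sets_conv_unit_interval)
qed

lemma Gamma_ratio_diff:
  fixes x a :: real
  assumes "x > 0" "a > 0"
  shows "Gamma x / Gamma (x + a) - Gamma (x + 1) / Gamma (x + 1 + a)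
    = a * (Gamma x / Gamma (x + a + 1))"
proof -
  have Gamma_x: "Gamma (x + 1) = x * Gamma x"
    and Gamma_xa: "Gamma (x + a + 1) = (x + a) * Gamma (x + a)"
    using assms by (auto intro!: Gamma_plus1 simp: nonpos_Ints_def)
  have reorder: "Gamma (x + 1 + a) = Gamma (x + a + 1)"
    by (simp add: add_ac)
  have "g / G - x * g / ((x + a) * G) = a * (g / ((x + a) * G))" if "G > 0" for g G :: real
    using that assms by (simp add: divide_simps) (simp add: algebra_simps)
  then show ?thesis
    unfolding Gamma_x reorder Gamma_xa using assms by (simp add: Gamma_real_pos)
qed

lemma ex_stieltjes_repr_Gamma_ratio:
  fixes s :: real
  assumes "0 < s" "s < 1"
  shows "\<exists>\<mu>. stieltjes_repr (Suc N) \<mu> (\<lambda>x. Gamma x / Gamma (x + real N + s))"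
proof (induction N)
  case 0
  have "Gamma s > 0"
    using assms by (simp add: Gamma_real_pos)
  then have "0 \<le> pochhammer (1 - s) k / fact k / Gamma s" for k
    using assms by (simp add: pochhammer_nonneg)
  moreover have "(\<lambda>k. pochhammer (1 - s) k / fact k / Gamma s / (x + k) ^ Suc 0)
      sums (Gamma x / Gamma (x + real 0 + s))"
    if "x > 0" for x :: real
    using sums_divide[OF Beta_sums[OF that assms], of "Gamma s"] \<open>Gamma s > 0\<close>
    by (simp add: Beta_def field_simps)
  ultimately have "stieltjes_repr (Suc 0)
      (distr (density (count_space UNIV) (\<lambda>k. ennreal (pochhammer (1 - s) k / fact k / Gamma s)))
        borel real)
      (\<lambda>x. Gamma x / Gamma (x + real 0 + s))"
    by (rule stieltjes_repr_point_masses)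
  then show ?case
    by blast
next
  case (Suc N)
  define f where "f = (\<lambda>x. Gamma x / Gamma (x + real N + s))"
  define c where "c = (N + 1) / (N + s)"
  obtain \<mu> where "stieltjes_repr (Suc N) \<mu> f"
    using Suc.IH unfolding f_def by blast
  then have "stieltjes_repr (Suc (Suc N)) (scale_measure (ennreal c) (conv_unit_interval \<mu>))
      (\<lambda>x. c * ((f x - f (x + 1)) / Suc N))"
    using assms by (intro stieltjes_repr_scale stieltjes_repr_forward_difference) (auto simp: c_def)
  moreover have "c * ((f x - f (x + 1)) / Suc N) = Gamma x / Gamma (x + real (Suc N) + s)"
    if "x > 0" for x
    using Gamma_ratio_diff[of x "N + s"] that assms by (simp add: f_def c_def add_ac)
  ultimately show ?case
    by (blast intro: stieltjes_repr_cong)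
qed

theorem proposition4p6:
  fixes N :: nat and s :: real
  assumes "0 < s" and "s < 1"
  shows "gen_stieltjes (real N + 1) (\<lambda>x. Gamma x / Gamma (x + real N + s))"
proof -
  obtain \<mu> where "stieltjes_repr (Suc N) \<mu> (\<lambda>x. Gamma x / Gamma (x + real N + s))"
    using ex_stieltjes_repr_Gamma_ratio assms by blast
  then show ?thesis
    using gen_stieltjes_if_stieltjes_repr[of "Suc N"] by (simp add: add.commute)
qed

end
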